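(* Let $X$ be a three-dimensional real Banach space and $V\subset X$ a two-dimensional subspace. Suppose $$\lambda_w^{\mathrm{id}_V}:=\inf\{\|P\|_w: P\in\mathcal{P}(X,V)\}>1.$$ Then there exists exactly one $P_0\in\mathcal{P}(X,V)$ with $\|P_0\|_w=\lambda_w^{\mathrm{id}_V}$, and there is $r>0$ such that $\|P\|_w\ge\|P_0\|_w+r\|P-P_0\|_w$ for all $P\in\mathcal{P}(X,V)$ (i.e. $0$ is a strongly unique best approximation to $P_0$ in $B_V(X,V)=\{L\in B(X,V):L|_V=0\}$ with respect to the numerical radius). In particular $P_0$ is the unique minimal projection with respect to the numerical radius.
   Context: $\mathcal{P}(X,V)$ is the set of linear projections from $X$ onto $V$, i.e. linear $P:X\to V$ with $Pv=v$ for all $v\in V$ (automatically bounded in finite dimensions). For $T\in B(X)$ the numerical radius is $\|T\|_w=\sup\{|x^*(Tx)|:x\in S_X,x^*\in S_{X^*},x^*(x)=1\}$. *)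

theory Defs
  imports "HOL-Analysis.Analysis"
begin

definition numrad :: "('a::real_normed_vector \<Rightarrow> 'a) \<Rightarrow> real" where
  "numrad T = Sup {\<bar>f (T x)\<bar> | x f. norm x = 1 \<and> bounded_linear f \<and> onorm f = 1 \<and> f x = 1}"

definition projections :: "'a::real_normed_vector set \<Rightarrow> ('a \<Rightarrow> 'a) set" where
  "projections V = {P. linear P \<and> range P \<subseteq> V \<and> (\<forall>v\<in>V. P v = v)}"

definition lambda_w :: "'a::real_normed_vector set \<Rightarrow> real" where
  "lambda_w V = Inf (numrad ` projections V)"

end

theory Submission
  imports Defs
begin

text \<open>
  Choose coordinates \<open>L : \<real>\<^sup>2 \<times> \<real> \<rightarrow> X\<close> with \<open>V = L(\<real>\<^sup>2 \<times> {0})\<close>.  The projections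
  onto \<open>V\<close> are then exactly \<open>P\<^sub>w y = y - h(y) L(w, 1)\<close>, \<open>w \<in> \<real>\<^sup>2\<close>, where \<open>h\<close> is the third
  coordinate, and their numerical radius is \<open>rad w = max\<^sub>p |aff p w|\<close>, a maximum of absolute
  values of affine functions of \<open>w\<close> over the compact set of states \<open>p = (x, u)\<close> (unit vector
  \<open>x\<close>, norming functional \<open>u\<close>) of the transported norm on \<open>\<real>\<^sup>3\<close>.

  The function \<open>rad\<close> is Lipschitz and coercive, hence has a minimizer \<open>w\<^sub>0\<close>.  If
  \<open>rad w\<^sub>0 > 1\<close>, every direction \<open>d\<close> strictly increases some active (maximizing) affine
  piece: otherwise a competitor built from a Hahn--Banach functional (this uses that the
  \<open>w\<close>-plane is two-dimensional) gives a descent direction.  By compactness the increase is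
  uniform, so \<open>rad w \<ge> rad w\<^sub>0 + k |w - w\<^sub>0|\<close>; since \<open>numrad (P\<^sub>w - P\<^sub>w\<^sub>0) \<le> lipK |w - w\<^sub>0|\<close>
  this is the strong uniqueness of \<open>P\<^sub>w\<^sub>0\<close>, and uniqueness follows.
\<close>

lemma compact_nonneg_part:
  fixes f :: "'x::metric_space \<Rightarrow> real"
  assumes "compact S" "continuous_on S f"
  shows "compact {q\<in>S. 0 \<le> f q}"
proof -
  have "closed (S \<inter> f -` {0..})"
    by (rule continuous_closed_preimage[OF assms(2) compact_imp_closed[OF assms(1)]]) simp
  from compact_Int_closed[OF assms(1) this] show ?thesis
    by (simp add: Int_def Collect_conj_eq[symmetric])
qed

lemma compact_penalty:
  fixes P Q :: "'x::metric_space \<Rightarrow> real"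
  assumes S: "compact S" and cP: "continuous_on S P" and cQ: "continuous_on S Q"
    and Q_le: "\<forall>q\<in>S. Q q \<le> 0" and Q_zero: "\<forall>q\<in>S. Q q = 0 \<longrightarrow> P q < 0"
  shows "\<exists>K. \<forall>q\<in>S. P q + K * Q q < 0"
proof -
  define C where "C = {q\<in>S. 0 \<le> P q}"
  have cC: "compact C" unfolding C_def by (rule compact_nonneg_part[OF S cP])
  show ?thesis
  proof (cases "C = {}")
    case True
    then have "\<forall>q\<in>S. P q + 0 * Q q < 0" by (auto simp: C_def not_le)
    then show ?thesis by blast
  next
    case False
    have "continuous_on C Q" using cQ by (rule continuous_on_subset) (auto simp: C_def)
    from continuous_attains_sup[OF cC False this]
    obtain q1 where q1: "q1 \<in> C" "\<forall>q\<in>C. Q q \<le> Q q1" by blast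
    have "q1 \<in> S" "0 \<le> P q1" using q1 by (auto simp: C_def)
    then have Q_q1: "Q q1 < 0" using Q_le Q_zero by (metis less_eq_real_def not_le)
    from continuous_attains_sup[OF S _ cP] \<open>q1 \<in> S\<close>
    obtain q2 where q2: "q2 \<in> S" "\<forall>q\<in>S. P q \<le> P q2" by blast
    have P_q2: "0 \<le> P q2" using q2 \<open>q1 \<in> S\<close> \<open>0 \<le> P q1\<close> by force
    define K where "K = (P q2 + 1) / (- Q q1)"
    have K_nonneg: "0 \<le> K" using P_q2 Q_q1 unfolding K_def by (intro divide_nonneg_pos) auto
    have K_Q_q1: "K * Q q1 = - (P q2 + 1)" using Q_q1 by (simp add: K_def)
    have "P q + K * Q q < 0" if q: "q \<in> S" for q
    proof (cases "0 \<le> P q")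
      case True
      then have "Q q \<le> Q q1" using q q1 by (simp add: C_def)
      then have "K * Q q \<le> K * Q q1" using K_nonneg by (simp add: mult_left_mono)
      then show ?thesis using K_Q_q1 q2 q by force
    next
      case False
      have "K * Q q \<le> 0" using K_nonneg Q_le q by (simp add: mult_nonneg_nonpos)
      then show ?thesis using False by linarith
    qed
    then show ?thesis by blast
  qed
qed

lemma compact_perturbation:
  fixes F D :: "'x::metric_space \<Rightarrow> real"
  assumes S: "compact S" and cF: "continuous_on S F" and cD: "continuous_on S D"
    and F_le: "\<forall>q\<in>S. F q \<le> lam" and F_eq: "\<forall>q\<in>S. F q = lam \<longrightarrow> D q < 0"
  shows "\<exists>e>0. \<forall>q\<in>S. F q + e * D q < lam"
proof -
  define C where "C = {q\<in>S. 0 \<le> D q}"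
  have cC: "compact C" unfolding C_def by (rule compact_nonneg_part[OF S cD])
  show ?thesis
  proof (cases "C = {}")
    case True
    then have "\<forall>q\<in>S. F q + 1 * D q < lam" using F_le by (force simp: C_def not_le)
    then show ?thesis by (intro exI[of _ 1]) auto
  next
    case False
    have "continuous_on C F" using cF by (rule continuous_on_subset) (auto simp: C_def)
    from continuous_attains_sup[OF cC False this]
    obtain q1 where q1: "q1 \<in> C" "\<forall>q\<in>C. F q \<le> F q1" by blast
    have "q1 \<in> S" "0 \<le> D q1" using q1 by (auto simp: C_def)
    then have F_q1: "F q1 < lam" using F_le F_eq by (metis less_eq_real_def not_le)
    from continuous_attains_sup[OF S _ cD] \<open>q1 \<in> S\<close>
    obtain q2 where q2: "q2 \<in> S" "\<forall>q\<in>S. D q \<le> D q2" by blast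
    have D_q2: "0 \<le> D q2" using q2 \<open>q1 \<in> S\<close> \<open>0 \<le> D q1\<close> by force
    define e where "e = (lam - F q1) / (D q2 + 1)"
    have e_pos: "0 < e" using D_q2 F_q1 by (simp add: e_def)
    have e_D_q2: "e * D q2 < lam - F q1"
    proof -
      have "e * D q2 < e * (D q2 + 1)" using e_pos by simp
      also have "\<dots> = lam - F q1" using D_q2 by (simp add: e_def)
      finally show ?thesis .
    qed
    have "F q + e * D q < lam" if q: "q \<in> S" for q
    proof (cases "0 \<le> D q")
      case True
      then have "F q \<le> F q1" using q q1 by (simp add: C_def)
      moreover have "e * D q \<le> e * D q2" using e_pos q2 q by (simp add: mult_left_mono)
      ultimately show ?thesis using e_D_q2 by linarith
    next
      case False
      then have "e * D q < 0" using e_pos by (simp add: mult_pos_neg)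
      then show ?thesis using F_le q by force
    qed
    then show ?thesis using e_pos by blast
  qed
qed

lemma continuous_on_Lipschitz_bound:
  fixes f :: "'b::real_normed_vector \<Rightarrow> real"
  assumes "0 \<le> C" and "\<And>x y. f x - f y \<le> C * norm (x - y)"
  shows "continuous_on S f"
proof -
  have "C-lipschitz_on S f"
  proof (rule lipschitz_onI[OF _ assms(1)])
    fix x y
    show "dist (f x) (f y) \<le> C * dist x y"
      using assms(2)[of x y] assms(2)[of y x] norm_minus_commute[of x y]
      by (simp add: dist_real_def dist_norm abs_le_iff)
  qed
  then show ?thesis by (rule lipschitz_on_continuous_on)
qed

text \<open>If a bounded family of uniformly Lipschitz functions has, at every unit vector, a member
  that is positive there, then some member exceeds a fixed \<open>k > 0\<close> at every unit vector:
  the pointwise supremum is continuous and positive on the compact unit sphere.\<close>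
lemma uniform_positivity_on_sphere:
  fixes l :: "'i \<Rightarrow> 'b::euclidean_space \<Rightarrow> real"
  assumes I: "I \<noteq> {}" and K: "0 < K"
    and lip: "\<And>q d d'. q \<in> I \<Longrightarrow> l q d - l q d' \<le> K * norm (d - d')"
    and bd: "\<And>q d. q \<in> I \<Longrightarrow> \<bar>l q d\<bar> \<le> K * norm d"
    and pos: "\<And>d. norm d = 1 \<Longrightarrow> \<exists>q\<in>I. 0 < l q d"
  shows "\<exists>k>0. \<forall>d. norm d = 1 \<longrightarrow> (\<exists>q\<in>I. k \<le> l q d)"
proof -
  define G where "G d = Sup ((\<lambda>q. l q d) ` I)" for d
  have bdd: "bdd_above ((\<lambda>q. l q d) ` I)" for d
    using bd by (intro bdd_aboveI2[of _ _ "K * norm d"]) (meson abs_le_D1)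
  have G_upper: "q \<in> I \<Longrightarrow> l q d \<le> G d" for q d
    unfolding G_def by (rule cSup_upper) (use bdd in auto)
  have G_lip: "G d' - G d \<le> K * norm (d' - d)" for d d'
  proof -
    have "G d' \<le> G d + K * norm (d' - d)"
      unfolding G_def[of d']
    proof (rule cSup_least)
      show "(\<lambda>q. l q d') ` I \<noteq> {}" using I by simp
      fix x assume "x \<in> (\<lambda>q. l q d') ` I"
      then obtain q where q: "q \<in> I" "x = l q d'" by blast
      then show "x \<le> G d + K * norm (d' - d)"
        using lip[OF q(1), of d' d] G_upper[OF q(1), of d] by linarith
    qed
    then show ?thesis by simp
  qed
  have "continuous_on (sphere 0 1) G"
    by (rule continuous_on_Lipschitz_bound[OF less_imp_le[OF K] G_lip])
  from continuous_attains_inf[OF compact_sphere _ this]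
  obtain d0 where d0: "norm d0 = 1" "\<And>d. norm d = 1 \<Longrightarrow> G d0 \<le> G d" by auto
  obtain q0 where "q0 \<in> I" "0 < l q0 d0" using pos[OF d0(1)] by blast
  then have G0: "0 < G d0" using G_upper by (meson less_le_trans)
  show ?thesis
  proof (intro exI[of _ "G d0 / 2"] conjI allI impI)
    show "0 < G d0 / 2" using G0 by simp
    fix d :: 'b assume "norm d = 1"
    then have "G d0 \<le> G d" using d0 by simp
    then have "G d - G d0 / 2 < Sup ((\<lambda>q. l q d) ` I)" using G0 by (simp add: G_def)
    then obtain x where "x \<in> (\<lambda>q. l q d) ` I" "G d - G d0 / 2 < x"
      using less_cSup_iff[OF _ bdd] I by blast
    then show "\<exists>q\<in>I. G d0 / 2 \<le> l q d" using \<open>G d0 \<le> G d\<close> by force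
  qed
qed

section \<open>Affine data of the projections in coordinates\<close>

text \<open>Coordinates: \<open>X = \<real>\<^sup>3 = \<real>\<^sup>2 \<times> \<real>\<close> with \<open>V = \<real>\<^sup>2 \<times> {0}\<close>.  A pair \<open>p = (x, u)\<close> consists of a point
  \<open>x\<close> and a functional \<open>u\<close> (represented by the Euclidean inner product).  For the projection
  \<open>P\<^sub>w c = c - snd c \<cdot> (w, 1)\<close> one has \<open>u (P\<^sub>w x) = aff p w\<close> whenever \<open>u x = 1\<close>; this is
  affine in \<open>w\<close> with linear part \<open>-lin p\<close>.\<close>
type_synonym e2 = "real \<times> real"
type_synonym e3 = "(real \<times> real) \<times> real"

definition aff :: "e3 \<times> e3 \<Rightarrow> e2 \<Rightarrow> real" where
  "aff p w = 1 - snd (fst p) * inner (snd p) (w, 1)"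

definition lin :: "e3 \<times> e3 \<Rightarrow> e2 \<Rightarrow> real" where
  "lin p d = snd (fst p) * inner (snd p) (d, 0)"

lemma aff_add: "aff p (w + d) = aff p w - lin p d"
  by (simp add: aff_def lin_def inner_prod_def algebra_simps)

lemma lin_scale: "lin p (t *\<^sub>R d) = t * lin p d"
  by (simp add: lin_def inner_prod_def algebra_simps)

lemma lin_diff: "lin p d - lin p d' = lin p (d - d')"
  by (simp add: lin_def inner_prod_def algebra_simps)

lemma continuous_on_aff [continuous_intros]:
  "continuous_on S f \<Longrightarrow> continuous_on S (\<lambda>x. aff (f x) w)"
  unfolding aff_def by (intro continuous_intros)

lemma continuous_on_lin [continuous_intros]:
  "continuous_on S f \<Longrightarrow> continuous_on S (\<lambda>x. lin (f x) w)"
  unfolding lin_def by (intro continuous_intros)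


section \<open>A norm on \<open>\<real>\<^sup>3\<close> and the numerical radius of the projections\<close>

text \<open>A norm \<open>nn\<close> on \<open>\<real>\<^sup>3\<close>, equivalent to the Euclidean norm with constants \<open>m\<close> and \<open>M\<close>
  (it will be the norm of \<open>X\<close> transported along a coordinate isomorphism).\<close>
locale equiv_norm =
  fixes nn :: "e3 \<Rightarrow> real" and m M :: real
  assumes nn_add: "nn (x + y) \<le> nn x + nn y"
    and nn_scale: "nn (t *\<^sub>R x) = \<bar>t\<bar> * nn x"
    and m_pos: "0 < m" and nn_lower: "m * norm x \<le> nn x" and nn_upper: "nn x \<le> M * norm x"
begin

lemma nn_nonneg: "0 \<le> nn x"
proof -
  have "0 \<le> m * norm x" using m_pos by simp
  then show ?thesis using nn_lower[of x] by linarith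
qed

lemma M_pos: "0 < M"
proof -
  have "m * norm ((1::real,0::real),0::real) \<le> M * norm ((1::real,0::real),0::real)"
    using nn_lower[of "((1,0),0)"] nn_upper[of "((1,0),0)"] by linarith
  then show ?thesis using m_pos by (simp add: norm_Pair)
qed

lemma nn_zero: "nn 0 = 0"
  using nn_scale[of 0 0] by simp

lemma nn_minus: "nn (- x) = nn x"
  using nn_scale[of "-1" x] by simp

lemma nn_eq_0: "nn x = 0 \<Longrightarrow> x = 0"
  using nn_lower[of x] m_pos by (simp add: mult_le_0_iff)

lemma nn_Lipschitz: "nn x - nn y \<le> M * norm (x - y)"
  using nn_add[of y "x - y"] nn_upper[of "x - y"] by simp

lemma continuous_on_nn [continuous_intros]:
  "continuous_on S f \<Longrightarrow> continuous_on S (\<lambda>x. nn (f x))"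
  using continuous_on_compose2[OF continuous_on_Lipschitz_bound[OF less_imp_le[OF M_pos] nn_Lipschitz]]
  by blast

lemma convex_open_unit_ball: "convex {c. nn c < 1}"
proof (rule convexI, safe)
  fix x y and u v :: real assume xy: "nn x < 1" "nn y < 1" "0 \<le> u" "0 \<le> v" "u + v = 1"
  have "nn (u *\<^sub>R x + v *\<^sub>R y) \<le> u * nn x + v * nn y"
    using nn_add[of "u *\<^sub>R x" "v *\<^sub>R y"] nn_scale[of u x] nn_scale[of v y] xy by simp
  also have "\<dots> < 1"
  proof (cases "u = 0")
    case True then show ?thesis using xy by simp
  next
    case False
    then have "u * nn x < u * 1" using xy by simp
    moreover have "v * nn y \<le> v * 1" using xy by (intro mult_left_mono) auto
    ultimately show ?thesis using xy by linarith
  qed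
  finally show "nn (u *\<^sub>R x + v *\<^sub>R y) < 1" .
qed

lemma functional_norm_bound:
  assumes ball: "\<And>x. nn x < 1 \<Longrightarrow> inner a x \<le> b"
  shows "\<bar>inner a y\<bar> \<le> b * nn y"
proof -
  have bound: "inner a y \<le> b * nn y" for y
  proof (cases "nn y = 0")
    case True then have "y = 0" by (rule nn_eq_0)
    then show ?thesis using True by simp
  next
    case False
    then have pos: "0 < nn y" using nn_nonneg[of y] by simp
    have "z * (inner a y / nn y) \<le> b" if "0 < z" "z < 1" for z
    proof -
      have "nn ((z / nn y) *\<^sub>R y) = z" using pos that nn_scale[of "z / nn y" y] by simp
      then show ?thesis using that ball[of "(z / nn y) *\<^sub>R y"] by simp
    qed
    then have "inner a y / nn y \<le> b" by (rule field_le_mult_one_interval)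
    then show ?thesis using pos by (simp add: field_simps)
  qed
  show ?thesis using bound[of y] bound[of "-y"] nn_minus[of y] by (simp add: inner_minus_right)
qed

lemma norming_separation:
  assumes line: "\<And>t. 1 \<le> nn (y0 + t *\<^sub>R e)"
  shows "\<exists>u. (\<forall>y. \<bar>inner u y\<bar> \<le> nn y) \<and> inner u e = 0 \<and> 1 \<le> inner u y0"
proof -
  have convex_line: "convex (range (\<lambda>t. y0 + t *\<^sub>R e))"
  proof (rule convexI)
    fix x y and u v :: real assume "x \<in> range (\<lambda>t. y0 + t *\<^sub>R e)" "y \<in> range (\<lambda>t. y0 + t *\<^sub>R e)"
      "u + v = 1"
    then obtain t s where ts: "x = y0 + t *\<^sub>R e" "y = y0 + s *\<^sub>R e" by auto
    have "u *\<^sub>R x + v *\<^sub>R y = (u + v) *\<^sub>R y0 + (u * t + v * s) *\<^sub>R e"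
      by (simp add: ts algebra_simps)
    then show "u *\<^sub>R x + v *\<^sub>R y \<in> range (\<lambda>t. y0 + t *\<^sub>R e)" using \<open>u + v = 1\<close> by auto
  qed
  have "{c. nn c < 1} \<noteq> {}" using nn_zero by (metis empty_iff mem_Collect_eq zero_less_one)
  moreover have "{c. nn c < 1} \<inter> range (\<lambda>t. y0 + t *\<^sub>R e) = {}"
    using line by (metis (mono_tags, lifting) disjoint_iff mem_Collect_eq not_le rangeE)
  ultimately obtain a b where a: "a \<noteq> 0" and a_ball: "\<And>x. nn x < 1 \<Longrightarrow> inner a x \<le> b"
    and a_line: "\<And>t. b \<le> inner a (y0 + t *\<^sub>R e)"
    using separating_hyperplane_sets[OF convex_open_unit_ball convex_line] by blast
  have a_e: "inner a e = 0"
  proof (rule ccontr)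
    assume ne: "inner a e \<noteq> 0"
    define t where "t = (b - inner a y0 - 1) / inner a e"
    have "inner a (y0 + t *\<^sub>R e) = inner a y0 + t * inner a e" by (simp add: inner_add_right)
    also have "\<dots> = b - 1" using ne by (simp add: t_def)
    finally show False using a_line[of t] by simp
  qed
  have abs_bound: "\<bar>inner a y\<bar> \<le> b * nn y" for y by (rule functional_norm_bound[OF a_ball])
  have b_pos: "0 < b"
  proof -
    have "0 < inner a a" using a by simp
    also have "\<dots> \<le> b * nn a" using abs_bound[of a] by simp
    finally show ?thesis using nn_nonneg[of a] by (simp add: zero_less_mult_iff)
  qed
  show ?thesis
  proof (intro exI[of _ "(1 / b) *\<^sub>R a"] conjI allI)
    show "\<bar>inner ((1 / b) *\<^sub>R a) y\<bar> \<le> nn y" for y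
      using abs_bound[of y] b_pos by (simp add: field_simps)
    show "inner ((1 / b) *\<^sub>R a) e = 0" using a_e by simp
    show "1 \<le> inner ((1 / b) *\<^sub>R a) y0" using a_line[of 0] b_pos by (simp add: field_simps)
  qed
qed

text \<open>The states of \<open>(\<real>\<^sup>3, nn)\<close>: unit vectors together with a norming functional;
  the numerical radius is a supremum over them.\<close>
definition states :: "(e3 \<times> e3) set" where
  "states = {p. nn (fst p) = 1 \<and> (\<forall>y. \<bar>inner (snd p) y\<bar> \<le> nn y) \<and> inner (snd p) (fst p) = 1}"

lemma statesD:
  assumes "p \<in> states"
  shows "nn (fst p) = 1" "\<And>y. \<bar>inner (snd p) y\<bar> \<le> nn y" "inner (snd p) (fst p) = 1"
  using assms by (auto simp: states_def)

lemma states_fst_norm: "p \<in> states \<Longrightarrow> norm (fst p) \<le> 1 / m"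
  using nn_lower[of "fst p"] statesD(1) m_pos by (simp add: field_simps)

lemma states_snd_norm:
  assumes "p \<in> states" shows "norm (snd p) \<le> M"
proof -
  have "norm (snd p) * norm (snd p) \<le> M * norm (snd p)"
    using statesD(2)[OF assms, of "snd p"] nn_upper[of "snd p"]
    by (simp add: power2_eq_square[symmetric] power2_norm_eq_inner)
  then show ?thesis using M_pos by (cases "snd p = 0") auto
qed

text \<open>A Lipschitz constant, in \<open>w\<close>, of every function \<open>aff p\<close> with \<open>p\<close> a state.\<close>
definition lipK :: real where "lipK = M / m"

lemma lipK_pos: "0 < lipK"
  using M_pos m_pos by (simp add: lipK_def)

lemma lin_bound:
  assumes "p \<in> states" shows "\<bar>lin p d\<bar> \<le> lipK * norm d"
proof -
  have "\<bar>inner (snd p) (d, 0)\<bar> \<le> norm (snd p) * norm (d, 0::real)" by (rule Cauchy_Schwarz_ineq2)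
  also have "\<dots> \<le> M * norm d" using states_snd_norm[OF assms] by (simp add: mult_right_mono)
  finally have "\<bar>inner (snd p) (d, 0)\<bar> \<le> M * norm d" .
  moreover have "\<bar>snd (fst p)\<bar> \<le> 1 / m"
    using norm_snd_le[of "snd (fst p)" "fst (fst p)"] states_fst_norm[OF assms] by simp
  ultimately have "\<bar>snd (fst p)\<bar> * \<bar>inner (snd p) (d, 0)\<bar> \<le> (1 / m) * (M * norm d)"
    using m_pos by (intro mult_mono) auto
  then show ?thesis by (simp add: lin_def lipK_def abs_mult)
qed

lemma compact_states: "compact states"
  unfolding compact_eq_bounded_closed
proof
  show "bounded states"
    unfolding bounded_iff
  proof (intro exI ballI)
    fix p assume p: "p \<in> states"
    have "norm p \<le> norm (fst p) + norm (snd p)" using norm_Pair_le[of "fst p" "snd p"] by simp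
    then show "norm p \<le> 1 / m + M" using states_fst_norm[OF p] states_snd_norm[OF p] by linarith
  qed
  have "states = {p. nn (fst p) = 1} \<inter> {p. inner (snd p) (fst p) = 1}
      \<inter> (\<Inter>y. {p. \<bar>inner (snd p) y\<bar> \<le> nn y})"
    by (auto simp: states_def)
  then show "closed states"
    by (simp only:) (intro closed_Int closed_INT ballI closed_Collect_le closed_Collect_eq continuous_intros)
qed

lemma norming_functional_exists:
  assumes "nn c = 1" shows "\<exists>u. (c, u) \<in> states"
proof -
  obtain u where u: "\<forall>y. \<bar>inner u y\<bar> \<le> nn y" "1 \<le> inner u c"
    using norming_separation[of c 0] assms by auto
  have "inner u c \<le> 1" using u(1) assms by (metis abs_le_D1)
  then show ?thesis using u assms by (intro exI[of _ u]) (simp add: states_def)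
qed

lemma states_nonempty: "states \<noteq> {}"
proof -
  define k :: e3 where "k = ((0,0),1)"
  have "k \<noteq> 0" by (simp add: k_def zero_prod_def)
  then have k_pos: "0 < nn k" using nn_nonneg[of k] nn_eq_0[of k] by linarith
  have "nn ((1 / nn k) *\<^sub>R k) = 1" using k_pos nn_scale[of "1 / nn k" k] by simp
  then show ?thesis using norming_functional_exists by blast
qed

text \<open>The numerical radius of the projection with parameter \<open>w\<close>.\<close>
definition rad :: "e2 \<Rightarrow> real" where
  "rad w = Sup ((\<lambda>p. \<bar>aff p w\<bar>) ` states)"

lemma rad_attained: "\<exists>p\<in>states. rad w = \<bar>aff p w\<bar> \<and> (\<forall>q\<in>states. \<bar>aff q w\<bar> \<le> \<bar>aff p w\<bar>)"
proof -
  have "continuous_on states (\<lambda>p. \<bar>aff p w\<bar>)" by (intro continuous_intros)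
  from continuous_attains_sup[OF compact_states states_nonempty this]
  obtain p where p: "p \<in> states" "\<forall>q\<in>states. \<bar>aff q w\<bar> \<le> \<bar>aff p w\<bar>" by blast
  have "rad w = \<bar>aff p w\<bar>" unfolding rad_def by (rule cSup_eq_maximum) (use p in auto)
  then show ?thesis using p by blast
qed

lemma rad_upper: "p \<in> states \<Longrightarrow> \<bar>aff p w\<bar> \<le> rad w"
  using rad_attained[of w] by auto

lemma rad_nonneg: "0 \<le> rad w"
  using rad_attained[of w] by auto

lemma rad_Lipschitz: "rad w - rad w' \<le> lipK * norm (w - w')"
proof -
  obtain p where p: "p \<in> states" "rad w = \<bar>aff p w\<bar>" using rad_attained by blast
  have "aff p w' = aff p w - lin p (w' - w)" using aff_add[of p w "w' - w"] by simp
  moreover have "\<bar>lin p (w' - w)\<bar> \<le> lipK * norm (w - w')"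
    using lin_bound[OF p(1), of "w' - w"] by (simp add: norm_minus_commute)
  moreover have "\<bar>aff p w'\<bar> \<le> rad w'" by (rule rad_upper[OF p(1)])
  ultimately show ?thesis using p(2) by linarith
qed

lemma continuous_rad: "continuous_on S rad"
  by (rule continuous_on_Lipschitz_bound[OF less_imp_le[OF lipK_pos] rad_Lipschitz])

end

section \<open>Plane geometry used for the competitor projection\<close>

text \<open>This is the only place where \<open>dim V = 2\<close> is used.\<close>
definition rot :: "e2 \<Rightarrow> e2" where "rot d = (- snd d, fst d)"

lemma norm_rot [simp]: "norm (rot d) = norm d"
  by (cases d) (simp add: rot_def norm_Pair add.commute)

lemma inner_rot_self [simp]: "inner d (rot d) = 0"
  by (simp add: rot_def inner_prod_def)

lemma orthogonal_plane_decomp: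
  assumes d: "norm d = 1" and ad: "inner a d = 0"
  shows "a = inner a (rot d) *\<^sub>R rot d"
proof -
  obtain a1 a2 d1 d2 where eqs: "a = (a1, a2)" "d = (d1, d2)" by (cases a, cases d)
  have unit: "d1\<^sup>2 + d2\<^sup>2 = 1" using d by (simp add: eqs norm_Pair)
  have orth: "a1 * d1 + a2 * d2 = 0" using ad by (simp add: eqs inner_prod_def)
  have "a1 = a1 * (d1\<^sup>2 + d2\<^sup>2) - d1 * (a1 * d1 + a2 * d2)" using unit orth by simp
  also have "\<dots> = (a2 * d1 - a1 * d2) * - d2" by (simp add: power2_eq_square algebra_simps)
  finally have 1: "a1 = (a2 * d1 - a1 * d2) * - d2" .
  have "a2 = a2 * (d1\<^sup>2 + d2\<^sup>2) - d2 * (a1 * d1 + a2 * d2)" using unit orth by simp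
  also have "\<dots> = (a2 * d1 - a1 * d2) * d1" by (simp add: power2_eq_square algebra_simps)
  finally have 2: "a2 = (a2 * d1 - a1 * d2) * d1" .
  show ?thesis using 1 2 by (simp add: eqs rot_def inner_prod_def algebra_simps)
qed

lemma aff_competitor_identity:
  fixes x u psi :: e3
  assumes d: "norm d = 1" and u_d: "inner (fst u) d = 0" and psi_d: "inner (fst psi) d = 0"
    and ux: "inner u x = 1" and beta: "beta = inner (fst psi) (rot d)" "beta \<noteq> 0"
  shows "aff (x, u) ((- (snd psi / beta)) *\<^sub>R rot d) = inner psi x / beta * inner (fst u) (rot d)"
proof -
  let ?w = "(- (snd psi / beta)) *\<^sub>R rot d"
  define mu where "mu = inner (fst u) (rot d)"
  have u_eq: "fst u = mu *\<^sub>R rot d" unfolding mu_def by (rule orthogonal_plane_decomp[OF d u_d])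
  have psi_eq: "fst psi = beta *\<^sub>R rot d" unfolding beta(1) by (rule orthogonal_plane_decomp[OF d psi_d])
  have rr: "inner (rot d) (rot d) = 1" using d by (simp add: dot_square_norm)
  define r where "r = inner (rot d) (fst x)"
  have mu_r: "mu * r = 1 - snd u * snd x" using ux u_eq by (simp add: inner_prod_def r_def algebra_simps)
  have psi_x: "inner psi x = beta * r + snd psi * snd x"
    using psi_eq by (simp add: inner_prod_def r_def algebra_simps)
  have inner_w: "inner u (?w, 1) = - mu * (snd psi / beta) + snd u"
  proof -
    have "inner u (?w, 1) = inner (fst u) ?w + snd u" by (simp add: inner_prod_def)
    also have "\<dots> = - mu * (snd psi / beta) + snd u" using u_eq rr by simp
    finally show ?thesis .
  qed
  have "aff (x, u) ?w = (1 - snd u * snd x) + mu * snd psi * snd x / beta"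
    unfolding aff_def prod.sel inner_w by (simp add: algebra_simps)
  also have "\<dots> = (beta * (mu * r) + mu * snd psi * snd x) / beta" using beta(2) by (simp add: mu_r field_simps)
  also have "\<dots> = inner psi x / beta * mu" using psi_x by (simp add: algebra_simps)
  finally show ?thesis by (simp add: mu_def)
qed

section \<open>Existence of a minimal projection\<close>

context equiv_norm
begin

text \<open>A norm cannot decrease forever along a line: it grows at least linearly.\<close>
lemma increase_along_line:
  assumes h: "norm h = 1"
  shows "\<exists>t. nn (k + (t - 1) *\<^sub>R h) < nn (k + t *\<^sub>R h)"
proof (rule ccontr)
  assume "\<not> ?thesis"
  then have step: "nn (k + t *\<^sub>R h) \<le> nn (k + (t - 1) *\<^sub>R h)" for t by (simp add: not_less)
  have decreasing: "nn (k + real n *\<^sub>R h) \<le> nn k" for n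
  proof (induction n)
    case 0 then show ?case by simp
  next
    case (Suc n)
    have "nn (k + real (Suc n) *\<^sub>R h) \<le> nn (k + (real (Suc n) - 1) *\<^sub>R h)" by (rule step)
    then show ?case using Suc by simp
  qed
  define n where "n = nat (ceiling (nn k / m + norm k)) + 1"
  have "nn k / m + norm k < real n" unfolding n_def by linarith
  then have n_big: "nn k < m * (real n - norm k)" using m_pos by (simp add: field_simps)
  have "norm (real n *\<^sub>R h) \<le> norm (k + real n *\<^sub>R h) + norm k"
    using norm_triangle_ineq4[of "k + real n *\<^sub>R h" k] by simp
  then have "real n - norm k \<le> norm (k + real n *\<^sub>R h)" using h by simp
  then have "m * (real n - norm k) \<le> m * norm (k + real n *\<^sub>R h)" using m_pos by simp
  also have "\<dots> \<le> nn (k + real n *\<^sub>R h)" by (rule nn_lower)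
  also have "\<dots> \<le> nn k" by (rule decreasing)
  finally show False using n_big by simp
qed

text \<open>Every direction \<open>d\<close> in the \<open>w\<close>-plane is seen by some state: moving along \<open>(d, 0)\<close>
  from the third basis vector, \<open>nn\<close> eventually increases, and a norming functional at such
  a point has \<open>lin p d > 0\<close>.\<close>
lemma state_detects_direction:
  assumes d: "norm d = 1"
  shows "\<exists>p\<in>states. 0 < lin p d"
proof -
  define dh :: e3 where "dh = (d, 0)"
  define k :: e3 where "k = ((0,0),1)"
  have "norm dh = 1" using d by (simp add: dh_def)
  then obtain t where t: "nn (k + (t - 1) *\<^sub>R dh) < nn (k + t *\<^sub>R dh)"
    using increase_along_line by blast
  define y where "y = k + t *\<^sub>R dh"
  have y_pos: "0 < nn y" using t nn_nonneg[of "k + (t - 1) *\<^sub>R dh"] by (simp add: y_def)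
  define x where "x = (1 / nn y) *\<^sub>R y"
  have "nn x = 1" using y_pos nn_scale[of "1 / nn y" y] by (simp add: x_def)
  then obtain u where u: "(x, u) \<in> states" using norming_functional_exists by blast
  have "inner u y = nn y" using statesD(3)[OF u] y_pos by (simp add: x_def field_simps)
  moreover have "inner u (y - dh) < nn y"
  proof -
    have shift: "y - dh = k + (t - 1) *\<^sub>R dh" by (simp add: y_def algebra_simps)
    have "nn (y - dh) < nn y" unfolding shift using t by (simp add: y_def)
    moreover have "\<bar>inner u (y - dh)\<bar> \<le> nn (y - dh)" using statesD(2)[OF u] by simp
    ultimately show ?thesis by linarith
  qed
  ultimately have "0 < inner u dh" by (simp add: inner_diff_right)
  moreover have "snd x = 1 / nn y" by (simp add: x_def y_def k_def dh_def)
  ultimately have "0 < lin (x, u) d" using y_pos by (simp add: lin_def dh_def)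
  then show ?thesis using u by force
qed

lemma rad_coercive: "\<exists>nu>0. \<forall>w. nu * norm w - rad 0 \<le> rad w"
proof -
  have "\<exists>k>0. \<forall>d. norm d = 1 \<longrightarrow> (\<exists>q\<in>states. k \<le> \<bar>lin q d\<bar>)"
  proof (rule uniform_positivity_on_sphere[OF states_nonempty lipK_pos])
    fix q d d' assume q: "q \<in> states"
    have "\<bar>lin q d\<bar> - \<bar>lin q d'\<bar> \<le> \<bar>lin q (d - d')\<bar>" using lin_diff[of q d d'] by linarith
    also have "\<dots> \<le> lipK * norm (d - d')" by (rule lin_bound[OF q])
    finally show "\<bar>lin q d\<bar> - \<bar>lin q d'\<bar> \<le> lipK * norm (d - d')" .
  next
    fix q d assume "q \<in> states"
    then show "\<bar>\<bar>lin q d\<bar>\<bar> \<le> lipK * norm d" using lin_bound by simp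
  next
    fix d :: e2 assume "norm d = 1"
    then obtain p where "p \<in> states" "0 < lin p d" using state_detects_direction by blast
    then show "\<exists>q\<in>states. 0 < \<bar>lin q d\<bar>" by (intro bexI[of _ p]) auto
  qed
  then obtain nu where nu: "0 < nu" "\<And>d. norm d = 1 \<Longrightarrow> \<exists>q\<in>states. nu \<le> \<bar>lin q d\<bar>" by blast
  have "nu * norm w - rad 0 \<le> rad w" for w
  proof (cases "w = 0")
    case True then show ?thesis using rad_nonneg[of 0] by simp
  next
    case False
    then have nw: "0 < norm w" by simp
    have "norm ((1 / norm w) *\<^sub>R w) = 1" using nw by simp
    then obtain q where q: "q \<in> states" "nu \<le> \<bar>lin q ((1 / norm w) *\<^sub>R w)\<bar>" using nu(2) by blast
    then have "nu \<le> \<bar>lin q w\<bar> / norm w" by (simp add: lin_scale abs_mult)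
    then have "nu * norm w \<le> \<bar>lin q w\<bar>" using nw by (simp add: pos_le_divide_eq)
    moreover have "aff q w = aff q 0 - lin q w" using aff_add[of q 0 w] by simp
    moreover have "\<bar>aff q 0\<bar> \<le> rad 0" "\<bar>aff q w\<bar> \<le> rad w" using rad_upper[OF q(1)] by auto
    ultimately show ?thesis by linarith
  qed
  then show ?thesis using nu(1) by blast
qed

text \<open>A continuous coercive function attains its minimum.\<close>
lemma rad_has_minimizer: "\<exists>w0. \<forall>w. rad w0 \<le> rad w"
proof -
  obtain nu where nu: "0 < nu" "\<And>w. nu * norm w - rad 0 \<le> rad w" using rad_coercive by blast
  define R where "R = 2 * rad 0 / nu"
  have "0 \<le> R" using rad_nonneg[of 0] nu(1) by (simp add: R_def)
  then have "cball (0::e2) R \<noteq> {}" by simp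
  from continuous_attains_inf[OF compact_cball this continuous_rad]
  obtain w0 where w0: "w0 \<in> cball 0 R" "\<forall>w\<in>cball 0 R. rad w0 \<le> rad w" by blast
  have "rad w0 \<le> rad w" for w
  proof (cases "w \<in> cball 0 R")
    case False
    then have "nu * R < nu * norm w" using nu(1) by simp
    then have "2 * rad 0 < nu * norm w" using nu(1) by (simp add: R_def)
    then have "rad 0 < rad w" using nu(2)[of w] by linarith
    moreover have "rad w0 \<le> rad 0" using w0 \<open>0 \<le> R\<close> by simp
    ultimately show ?thesis by simp
  qed (use w0 in blast)
  then show ?thesis by blast
qed

definition line_dist :: "e3 \<Rightarrow> e3 \<Rightarrow> real" where
  "line_dist e h = Inf (range (\<lambda>t. nn (e + t *\<^sub>R h)))"

lemma line_dist_le: "line_dist e h \<le> nn (e + t *\<^sub>R h)"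
proof -
  have "bdd_below (range (\<lambda>t. nn (e + t *\<^sub>R h)))"
    using nn_nonneg by (intro bdd_belowI2[of _ 0]) auto
  then show ?thesis unfolding line_dist_def by (rule cInf_lower[rotated]) simp
qed

lemma line_dist_greatest: "(\<And>t. c \<le> nn (e + t *\<^sub>R h)) \<Longrightarrow> c \<le> line_dist e h"
  unfolding line_dist_def by (rule cInf_greatest) auto

lemma functional_le_line_dist:
  assumes u: "\<forall>y. \<bar>inner u y\<bar> \<le> nn y" and u_h: "inner u h = 0"
  shows "\<bar>inner u e\<bar> \<le> line_dist e h"
proof (rule line_dist_greatest)
  fix t
  have "inner u (e + t *\<^sub>R h) = inner u e" using u_h by (simp add: inner_add_right)
  then show "\<bar>inner u e\<bar> \<le> nn (e + t *\<^sub>R h)" using u by metis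
qed

lemma line_dist_attained:
  assumes pos: "0 < line_dist e h"
  shows "\<exists>psi. (\<forall>y. \<bar>inner psi y\<bar> \<le> nn y) \<and> inner psi h = 0 \<and> inner psi e = line_dist e h"
proof -
  define q where "q = line_dist e h"
  have "1 \<le> nn ((1 / q) *\<^sub>R e + t *\<^sub>R h)" for t
  proof -
    have "(1 / q) *\<^sub>R e + t *\<^sub>R h = (1 / q) *\<^sub>R (e + (q * t) *\<^sub>R h)"
      using pos by (simp add: q_def algebra_simps)
    then have "nn ((1 / q) *\<^sub>R e + t *\<^sub>R h) = nn (e + (q * t) *\<^sub>R h) / q"
      using pos nn_scale by (simp add: q_def)
    then show ?thesis using line_dist_le[of e h "q * t"] pos by (simp add: q_def)
  qed
  from norming_separation[OF this] obtain psi where psi: "\<forall>y. \<bar>inner psi y\<bar> \<le> nn y"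
    "inner psi h = 0" "1 \<le> inner psi ((1 / q) *\<^sub>R e)" by blast
  have "q \<le> inner psi e" using psi(3) pos by (simp add: q_def field_simps)
  moreover have "inner psi e \<le> q"
    using abs_le_D1[OF functional_le_line_dist[OF psi(1,2), of e]] by (simp add: q_def)
  ultimately show ?thesis using psi(1,2) by (intro exI[of _ psi]) (simp add: q_def)
qed

text \<open>It is built from a functional \<open>\<psi>\<close> attaining the distance of \<open>(rot d, 0)\<close> to the line \<open>\<real>(d, 0)\<close>.\<close>
lemma flat_direction_competitor:
  assumes d: "norm d = 1"
  shows "\<exists>ws. \<forall>p\<in>states. lin p d = 0 \<longrightarrow> \<bar>aff p ws\<bar> \<le> 1"
proof -
  define dh :: e3 where "dh = (d, 0)"
  define eh :: e3 where "eh = (rot d, 0)"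
  define q0 where "q0 = line_dist eh dh"
  have "m \<le> q0" unfolding q0_def
  proof (rule line_dist_greatest)
    fix t
    have "inner (eh + t *\<^sub>R dh) eh = inner (rot d) (rot d) + t * inner d (rot d)"
      by (simp add: eh_def dh_def inner_prod_def algebra_simps)
    also have "\<dots> = 1" using d by (simp add: dot_square_norm)
    finally have "1 \<le> norm (eh + t *\<^sub>R dh) * norm eh"
      using norm_cauchy_schwarz[of "eh + t *\<^sub>R dh" eh] by simp
    then have "m * 1 \<le> m * norm (eh + t *\<^sub>R dh)" using d m_pos by (simp add: eh_def)
    then show "m \<le> nn (eh + t *\<^sub>R dh)" using nn_lower[of "eh + t *\<^sub>R dh"] by simp
  qed
  then have q0_pos: "0 < q0" using m_pos by simp
  then obtain psi where psi: "\<forall>y. \<bar>inner psi y\<bar> \<le> nn y" "inner psi dh = 0" "inner psi eh = q0"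
    using line_dist_attained unfolding q0_def by blast
  define beta where "beta = inner (fst psi) (rot d)"
  have beta_q0: "beta = q0" using psi(3) by (simp add: beta_def eh_def inner_prod_def)
  have psi_d: "inner (fst psi) d = 0" using psi(2) by (simp add: dh_def inner_prod_def)
  define ws :: e2 where "ws = (- (snd psi / beta)) *\<^sub>R rot d"
  have "\<bar>aff p ws\<bar> \<le> 1" if p: "p \<in> states" and flat: "lin p d = 0" for p
  proof (cases "snd (fst p) = 0")
    case True then show ?thesis by (simp add: aff_def)
  next
    case False
    then have u_dh: "inner (snd p) dh = 0" using flat by (simp add: lin_def dh_def)
    then have u_d: "inner (fst (snd p)) d = 0" by (simp add: dh_def inner_prod_def)
    have u_eh: "\<bar>inner (snd p) eh\<bar> \<le> q0"
      unfolding q0_def using functional_le_line_dist statesD(2)[OF p] u_dh by blast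
    have "aff p ws = inner psi (fst p) / beta * inner (fst (snd p)) (rot d)"
      using aff_competitor_identity[OF d u_d psi_d statesD(3)[OF p] beta_def] beta_q0 q0_pos
      by (simp add: ws_def)
    also have "inner (fst (snd p)) (rot d) = inner (snd p) eh" by (simp add: eh_def inner_prod_def)
    finally have "\<bar>aff p ws\<bar> = \<bar>inner psi (fst p)\<bar> * \<bar>inner (snd p) eh\<bar> / q0"
      using beta_q0 q0_pos by (simp add: abs_mult)
    also have "\<dots> \<le> 1 * q0 / q0"
    proof (intro divide_right_mono mult_mono)
      show "\<bar>inner psi (fst p)\<bar> \<le> 1" using psi(1) statesD(1)[OF p] by metis
    qed (use u_eh q0_pos in auto)
    also have "\<dots> = 1" using q0_pos by simp
    finally show ?thesis .
  qed
  then show ?thesis by blast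
qed

end

section \<open>Strong uniqueness of the minimum\<close>

context equiv_norm
begin

text \<open>Signed states \<open>(p, \<sigma>)\<close>, \<open>\<sigma> = \<plusminus>1\<close>, turn the absolute values in \<open>rad\<close> into a maximum of
  affine functions \<open>sval q\<close> of \<open>w\<close> with linear parts \<open>sslope q\<close>.\<close>
definition sstates :: "((e3 \<times> e3) \<times> real) set" where
  "sstates = states \<times> {-1, 1}"

definition sval :: "(e3 \<times> e3) \<times> real \<Rightarrow> e2 \<Rightarrow> real" where
  "sval q w = snd q * aff (fst q) w"

definition sslope :: "(e3 \<times> e3) \<times> real \<Rightarrow> e2 \<Rightarrow> real" where
  "sslope q d = - snd q * lin (fst q) d"

lemma sstatesD: "q \<in> sstates \<Longrightarrow> fst q \<in> states \<and> (snd q = 1 \<or> snd q = -1)"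
  by (auto simp: sstates_def)

lemma compact_sstates: "compact sstates"
  unfolding sstates_def by (intro compact_Times compact_states finite_imp_compact) simp

lemma sval_add: "sval q (w + d) = sval q w + sslope q d"
  by (simp add: sval_def sslope_def aff_add right_diff_distrib)

lemma sslope_add: "sslope q (a + b) = sslope q a + sslope q b"
  by (simp add: sslope_def lin_def inner_prod_def algebra_simps)

lemma sslope_scale: "sslope q (t *\<^sub>R a) = t * sslope q a"
  by (simp add: sslope_def lin_scale)

lemma sslope_bound: "q \<in> sstates \<Longrightarrow> \<bar>sslope q d\<bar> \<le> lipK * norm d"
  using sstatesD[of q] lin_bound[of "fst q" d] by (auto simp: sslope_def)

lemma sval_le_rad: "q \<in> sstates \<Longrightarrow> sval q w \<le> rad w"
  using sstatesD[of q] rad_upper[of "fst q" w] by (auto simp: sval_def)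

lemma rad_less_if_svals_less:
  assumes "\<forall>q\<in>sstates. sval q w < c" shows "rad w < c"
proof -
  obtain p where p: "p \<in> states" "rad w = \<bar>aff p w\<bar>" using rad_attained by blast
  have "(p, 1) \<in> sstates" "(p, -1) \<in> sstates" using p(1) by (auto simp: sstates_def)
  then have "aff p w < c" "- aff p w < c" using assms by (auto simp: sval_def)
  then show ?thesis using p(2) by (simp add: abs_less_iff)
qed

lemma continuous_on_sval: "continuous_on S (\<lambda>q. sval q w)"
  unfolding sval_def by (intro continuous_intros)

lemma continuous_on_sslope: "continuous_on S (\<lambda>q. sslope q d)"
  unfolding sslope_def by (intro continuous_intros)

definition active :: "e2 \<Rightarrow> ((e3 \<times> e3) \<times> real) set" where
  "active w0 = {q\<in>sstates. sval q w0 = rad w0}"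

lemma compact_active: "compact (active w0)"
proof -
  have "closed {q\<in>sstates. sval q w0 = rad w0}"
    by (rule continuous_closed_preimage_constant[OF continuous_on_sval compact_imp_closed[OF compact_sstates]])
  from compact_Int_closed[OF compact_sstates this] show ?thesis by (simp add: active_def Int_def)
qed

lemma active_nonempty: "active w0 \<noteq> {}"
proof -
  obtain p where p: "p \<in> states" "rad w0 = \<bar>aff p w0\<bar>" using rad_attained by blast
  define s :: real where "s = (if 0 \<le> aff p w0 then 1 else -1)"
  have "(p, s) \<in> active w0" using p by (simp add: active_def sstates_def sval_def s_def)
  then show ?thesis by blast
qed

lemma no_descent_direction:
  assumes min: "\<forall>w. rad w0 \<le> rad w"
  shows "\<not> (\<forall>q\<in>active w0. sslope q de < 0)"
proof
  assume descent: "\<forall>q\<in>active w0. sslope q de < 0"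
  have "\<exists>e>0. \<forall>q\<in>sstates. sval q w0 + e * sslope q de < rad w0"
  proof (rule compact_perturbation[OF compact_sstates continuous_on_sval continuous_on_sslope])
    show "\<forall>q\<in>sstates. sval q w0 \<le> rad w0" using sval_le_rad by blast
    show "\<forall>q\<in>sstates. sval q w0 = rad w0 \<longrightarrow> sslope q de < 0"
      using descent unfolding active_def by blast
  qed
  then obtain e where "\<forall>q\<in>sstates. sval q (w0 + e *\<^sub>R de) < rad w0"
    by (auto simp: sval_add sslope_scale)
  then have "rad (w0 + e *\<^sub>R de) < rad w0" by (rule rad_less_if_svals_less)
  then show False using min by (simp add: not_le[symmetric])
qed

text \<open>The key step, where \<open>rad w\<^sub>0 > 1\<close> enters: at a minimizer every direction strictly
  increases some active value.  Otherwise the competitor of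
  \<open>flat_direction_competitor\<close>, corrected by a large multiple of \<open>d\<close>, would be a descent
  direction.\<close>
lemma active_increase:
  assumes min: "\<forall>w. rad w0 \<le> rad w" and gt: "1 < rad w0" and d: "norm d = 1"
  shows "\<exists>q\<in>active w0. 0 < sslope q d"
proof (rule ccontr)
  assume "\<not> ?thesis"
  then have nonpos: "\<forall>q\<in>active w0. sslope q d \<le> 0" by (auto simp: not_less)
  obtain ws where ws: "\<forall>p\<in>states. lin p d = 0 \<longrightarrow> \<bar>aff p ws\<bar> \<le> 1"
    using flat_direction_competitor[OF d] by blast
  have "\<exists>K. \<forall>q\<in>active w0. (sval q ws - rad w0) + K * sslope q d < 0"
  proof (rule compact_penalty[OF compact_active])
    show "continuous_on (active w0) (\<lambda>q. sval q ws - rad w0)"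
      using continuous_on_sval by (intro continuous_intros)
    show "continuous_on (active w0) (\<lambda>q. sslope q d)" by (rule continuous_on_sslope)
    show "\<forall>q\<in>active w0. sslope q d \<le> 0" by (rule nonpos)
    show "\<forall>q\<in>active w0. sslope q d = 0 \<longrightarrow> sval q ws - rad w0 < 0"
    proof (intro ballI impI)
      fix q assume q: "q \<in> active w0" "sslope q d = 0"
      then have "fst q \<in> states" "snd q = 1 \<or> snd q = -1" using sstatesD by (auto simp: active_def)
      moreover from this q(2) have "lin (fst q) d = 0" by (auto simp: sslope_def)
      ultimately have "sval q ws \<le> 1" using ws by (auto simp: sval_def)
      then show "sval q ws - rad w0 < 0" using gt by simp
    qed
  qed
  then obtain K where K: "\<forall>q\<in>active w0. (sval q ws - rad w0) + K * sslope q d < 0" by blast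
  have "\<forall>q\<in>active w0. sslope q ((ws - w0) + K *\<^sub>R d) < 0"
  proof
    fix q assume q: "q \<in> active w0"
    have "sval q ws = rad w0 + sslope q (ws - w0)"
      using q sval_add[of q w0 "ws - w0"] by (simp add: active_def)
    moreover have "sslope q ((ws - w0) + K *\<^sub>R d) = sslope q (ws - w0) + K * sslope q d"
      by (simp add: sslope_add sslope_scale)
    ultimately show "sslope q ((ws - w0) + K *\<^sub>R d) < 0" using K q by auto
  qed
  then show False using no_descent_direction[OF min] by blast
qed

lemma sharp_minimum:
  assumes min: "\<forall>w. rad w0 \<le> rad w" and gt: "1 < rad w0"
  shows "\<exists>k>0. \<forall>w. rad w0 + k * norm (w - w0) \<le> rad w"
proof -
  have "\<exists>k>0. \<forall>d. norm d = 1 \<longrightarrow> (\<exists>q\<in>active w0. k \<le> sslope q d)"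
  proof (rule uniform_positivity_on_sphere[OF active_nonempty lipK_pos])
    fix q d d' assume "q \<in> active w0"
    then have "\<bar>sslope q (d - d')\<bar> \<le> lipK * norm (d - d')" using sslope_bound by (simp add: active_def)
    moreover have "sslope q d = sslope q d' + sslope q (d - d')" using sslope_add[of q d' "d - d'"] by simp
    ultimately show "sslope q d - sslope q d' \<le> lipK * norm (d - d')" by linarith
  next
    fix q d assume "q \<in> active w0"
    then show "\<bar>sslope q d\<bar> \<le> lipK * norm d" using sslope_bound by (simp add: active_def)
  qed (rule active_increase[OF min gt])
  then obtain k where k: "0 < k" "\<And>d. norm d = 1 \<Longrightarrow> \<exists>q\<in>active w0. k \<le> sslope q d" by blast
  have "rad w0 + k * norm (w - w0) \<le> rad w" for w
  proof (cases "w = w0")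
    case False
    define d where "d = (1 / norm (w - w0)) *\<^sub>R (w - w0)"
    have nd: "0 < norm (w - w0)" using False by simp
    then have "norm d = 1" by (simp add: d_def)
    then obtain q where q: "q \<in> active w0" "k \<le> sslope q d" using k(2) by blast
    have "w = w0 + norm (w - w0) *\<^sub>R d" using nd by (simp add: d_def)
    then have "sval q w = rad w0 + norm (w - w0) * sslope q d"
      using q(1) sval_add sslope_scale by (metis (mono_tags, lifting) active_def mem_Collect_eq)
    moreover have "norm (w - w0) * k \<le> norm (w - w0) * sslope q d" using q(2) nd by simp
    moreover have "sval q w \<le> rad w" using q(1) sval_le_rad by (simp add: active_def)
    ultimately show ?thesis by (simp add: mult.commute)
  qed simp
  then show ?thesis using k(1) by blast
qed

end

section \<open>Transfer to the Banach space\<close>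

locale coordinates =
  fixes L :: "e3 \<Rightarrow> 'a::real_normed_vector" and V :: "'a set"
  assumes linL: "linear L" and bijL: "bij L" and V_eq: "V = range (\<lambda>w. L (w, 0))"
begin

definition Li :: "'a \<Rightarrow> e3" where "Li = inv L"

lemma L_Li [simp]: "L (Li y) = y"
  unfolding Li_def by (rule surj_f_inv_f[OF bij_is_surj[OF bijL]])

lemma Li_L [simp]: "Li (L c) = c"
  unfolding Li_def by (rule inv_f_f[OF bij_is_inj[OF bijL]])

lemma linear_Li: "linear Li"
proof (rule linearI)
  fix x y show "Li (x + y) = Li x + Li y" by (metis L_Li Li_L linear_add[OF linL])
next
  fix r x show "Li (r *\<^sub>R x) = r *\<^sub>R Li x" by (metis L_Li Li_L linear_scale[OF linL])
qed

text \<open>The norm of \<open>X\<close> in coordinates; by compactness of the Euclidean sphere it is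
  equivalent to the Euclidean norm.\<close>
definition nn :: "e3 \<Rightarrow> real" where "nn c = norm (L c)"

lemma equiv_norm_exists: "\<exists>m M. equiv_norm nn m M"
proof -
  obtain M where M: "\<And>x. norm (L x) \<le> M * norm x" using linear_bounded_pos[OF linL] by blast
  have "bounded_linear L" using M linL
    by (intro bounded_linear_intro[of _ M]) (auto simp: linear_add linear_scale mult.commute)
  then have "continuous_on (sphere 0 1) (\<lambda>c. norm (L c))"
    by (intro continuous_intros linear_continuous_on)
  from continuous_attains_inf[OF compact_sphere _ this]
  obtain c0 :: e3 where c0: "norm c0 = 1" "\<And>c. norm c = 1 \<Longrightarrow> norm (L c0) \<le> norm (L c)" by auto
  define m where "m = norm (L c0)"
  have "L c0 \<noteq> 0" using c0(1) linear_0[OF linL] bij_is_inj[OF bijL] by (metis injD norm_zero zero_neq_one)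
  then have m_pos: "0 < m" by (simp add: m_def)
  have lower: "m * norm x \<le> nn x" for x
  proof (cases "x = 0")
    case True then show ?thesis by (simp add: nn_def linear_0[OF linL])
  next
    case False
    then have "m \<le> norm (L ((1 / norm x) *\<^sub>R x))" using c0(2) by (simp add: m_def)
    also have "\<dots> = norm (L x) / norm x" by (simp add: linear_scale[OF linL])
    finally show ?thesis using False by (simp add: nn_def field_simps)
  qed
  have "equiv_norm nn m M"
    by unfold_locales
      (use m_pos lower M in \<open>simp_all add: nn_def linear_add[OF linL] linear_scale[OF linL] norm_triangle_ineq\<close>)
  then show ?thesis by blast
qed

definition height :: "'a \<Rightarrow> real" where "height y = snd (Li y)"

lemma height_L [simp]: "height (L c) = snd c"
  by (simp add: height_def)

lemma linear_height: "linear height"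
  unfolding height_def using linear_Li by (intro linearI) (simp_all add: linear_add linear_scale)

lemma V_height: "V = {y. height y = 0}"
proof (intro set_eqI iffI)
  fix y assume "y \<in> {y. height y = 0}"
  then have "Li y = (fst (Li y), 0)" by (simp add: height_def prod_eq_iff)
  then have "y = L (fst (Li y), 0)" by (metis L_Li)
  then show "y \<in> V" unfolding V_eq by blast
qed (auto simp: V_eq)

definition Pw :: "e2 \<Rightarrow> 'a \<Rightarrow> 'a" where "Pw w y = y - height y *\<^sub>R L (w, 1)"

lemma Pw_projection: "Pw w \<in> projections V"
proof -
  have "linear (Pw w)" unfolding Pw_def using linear_height
    by (intro linearI) (simp_all add: linear_add linear_scale algebra_simps)
  moreover have "height (Pw w y) = 0" for y
    unfolding Pw_def using linear_height by (simp add: linear_diff linear_scale)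
  ultimately show ?thesis by (auto simp: projections_def V_height Pw_def)
qed

lemma projection_is_Pw:
  assumes P: "P \<in> projections V"
  shows "\<exists>w. P = Pw w"
proof -
  have linP: "linear P" and rP: "range P \<subseteq> V" and idP: "\<forall>v\<in>V. P v = v"
    using P by (auto simp: projections_def)
  define a where "a = L ((0,0),1)"
  have "height (P a) = 0" using rP by (auto simp: V_height)
  then have "height (a - P a) = 1" using linear_height by (simp add: a_def linear_diff)
  then have a_Pa: "L (fst (Li (a - P a)), 1) = a - P a"
    by (metis L_Li height_def prod.collapse)
  have "P y = Pw (fst (Li (a - P a))) y" for y
  proof -
    have "height (y - height y *\<^sub>R a) = 0" using linear_height by (simp add: a_def linear_diff linear_scale)
    then have "P (y - height y *\<^sub>R a) = y - height y *\<^sub>R a" using idP by (simp add: V_height)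
    then have "P y = y - height y *\<^sub>R (a - P a)"
      using linP by (simp add: linear_diff linear_scale algebra_simps)
    then show ?thesis by (simp add: Pw_def a_Pa)
  qed
  then show ?thesis by blast
qed

lemma linear_functional_coordinates:
  assumes "linear f"
  shows "f (L c) = inner ((f (L ((1,0),0)), f (L ((0,1),0))), f (L ((0,0),1))) c"
proof -
  obtain c1 c2 c3 where c: "c = ((c1, c2), c3)" by (metis prod.collapse)
  have "c = c1 *\<^sub>R ((1,0),0) + c2 *\<^sub>R ((0,1),0) + c3 *\<^sub>R ((0,0),1)" by (simp add: c)
  then have "L c = c1 *\<^sub>R L ((1,0),0) + c2 *\<^sub>R L ((0,1),0) + c3 *\<^sub>R L ((0,0),1)"
    by (metis linear_add[OF linL] linear_scale[OF linL])
  then show ?thesis using assms by (simp add: c linear_add linear_scale inner_prod_def)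
qed

lemma state_of_norming_pair:
  assumes bl: "bounded_linear f" and of: "onorm f = 1" and x: "norm x = 1" and fx: "f x = 1"
  shows "\<exists>u. (Li x, u) \<in> equiv_norm.states nn \<and> (\<forall>y. f y = inner u (Li y))"
proof -
  obtain m M where N: "equiv_norm nn m M" using equiv_norm_exists by blast
  define u where "u = ((f (L ((1,0),0)), f (L ((0,1),0))), f (L ((0,0),1)))"
  have fL: "f (L c) = inner u c" for c
    unfolding u_def by (rule linear_functional_coordinates[OF bounded_linear.linear[OF bl]])
  have f_eq: "f y = inner u (Li y)" for y using fL[of "Li y"] by simp
  have "\<bar>inner u y\<bar> \<le> nn y" for y
    using onorm[OF bl, of "L y"] of by (simp add: fL[symmetric] nn_def)
  then have "(Li x, u) \<in> equiv_norm.states nn"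
    using x fx by (simp add: equiv_norm.states_def[OF N] nn_def f_eq)
  then show ?thesis using f_eq by blast
qed

lemma norming_pair_of_state:
  assumes p: "p \<in> equiv_norm.states nn"
  defines "f \<equiv> \<lambda>y. inner (snd p) (Li y)"
  shows "bounded_linear f" "onorm f = 1" "norm (L (fst p)) = 1" "f (L (fst p)) = 1"
proof -
  obtain m M where N: "equiv_norm nn m M" using equiv_norm_exists by blast
  have fb: "norm (f y) \<le> norm y * 1" for y
    using equiv_norm.statesD(2)[OF N p, of "Li y"] by (simp add: f_def nn_def)
  show bl: "bounded_linear f"
    using fb linear_Li
    by (intro bounded_linear_intro[of _ 1]) (simp_all add: f_def linear_add linear_scale inner_add_right)
  show nx: "norm (L (fst p)) = 1" using equiv_norm.statesD(1)[OF N p] by (simp add: nn_def)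
  show fx: "f (L (fst p)) = 1" using equiv_norm.statesD(3)[OF N p] by (simp add: f_def)
  have "onorm f \<le> 1" by (rule onorm_bound) (use fb in \<open>simp_all add: mult.commute\<close>)
  moreover have "1 \<le> onorm f" using onorm[OF bl, of "L (fst p)"] nx fx by simp
  ultimately show "onorm f = 1" by simp
qed

lemma numrad_coordinates:
  "numrad T = Sup ((\<lambda>p. \<bar>inner (snd p) (Li (T (L (fst p))))\<bar>) ` equiv_norm.states nn)"
  unfolding numrad_def
proof (rule arg_cong[where f=Sup], rule set_eqI, rule iffI)
  fix r :: real assume "r \<in> {\<bar>f (T x)\<bar> | x f. norm x = 1 \<and> bounded_linear f \<and> onorm f = 1 \<and> f x = 1}"
  then obtain x and f :: "'a \<Rightarrow> real" where r: "r = \<bar>f (T x)\<bar>" and x: "norm x = 1"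
    and bl: "bounded_linear f" and of: "onorm f = 1" and fx: "f x = 1" by blast
  obtain u where u: "(Li x, u) \<in> equiv_norm.states nn" "\<And>y. f y = inner u (Li y)"
    using state_of_norming_pair[OF bl of x fx] by blast
  have "r = \<bar>inner u (Li (T (L (Li x))))\<bar>" using r u(2) by simp
  with u(1) show "r \<in> (\<lambda>p. \<bar>inner (snd p) (Li (T (L (fst p))))\<bar>) ` equiv_norm.states nn"
    by (metis (no_types, lifting) fst_conv snd_conv image_eqI)
next
  fix r :: real assume "r \<in> (\<lambda>p. \<bar>inner (snd p) (Li (T (L (fst p))))\<bar>) ` equiv_norm.states nn"
  then obtain p where p: "p \<in> equiv_norm.states nn" and r: "r = \<bar>inner (snd p) (Li (T (L (fst p))))\<bar>"
    by blast
  show "r \<in> {\<bar>f (T x)\<bar> | x f. norm x = 1 \<and> bounded_linear f \<and> onorm f = 1 \<and> f x = 1}"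
    unfolding mem_Collect_eq using norming_pair_of_state[OF p] r
    by (intro exI[of _ "L (fst p)"] exI[of _ "\<lambda>y. inner (snd p) (Li y)"]) simp
qed

lemma Li_Pw: "Li (Pw w (L c)) = c - snd c *\<^sub>R (w, 1)"
  using linear_Li by (simp add: Pw_def linear_diff linear_scale)

lemma numrad_Pw: "numrad (Pw w) = equiv_norm.rad nn w"
proof -
  obtain m M where N: "equiv_norm nn m M" using equiv_norm_exists by blast
  have "\<bar>inner (snd p) (Li (Pw w (L (fst p))))\<bar> = \<bar>aff p w\<bar>" if "p \<in> equiv_norm.states nn" for p
  proof -
    have "inner (snd p) (fst p) = 1" using equiv_norm.statesD(3)[OF N that] .
    then show ?thesis by (simp add: Li_Pw aff_def inner_diff_right inner_scaleR_right del: scaleR_Pair)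
  qed
  then show ?thesis
    unfolding numrad_coordinates equiv_norm.rad_def[OF N] by (metis (no_types, lifting) image_cong)
qed

lemma numrad_Pw_diff:
  assumes "equiv_norm nn m M"
  shows "numrad (\<lambda>x. Pw w x - Pw w0 x) \<le> equiv_norm.lipK m M * norm (w - w0)"
  unfolding numrad_coordinates
proof (rule cSup_least)
  show "(\<lambda>p. \<bar>inner (snd p) (Li (Pw w (L (fst p)) - Pw w0 (L (fst p))))\<bar>) ` equiv_norm.states nn \<noteq> {}"
    using equiv_norm.states_nonempty[OF assms] by simp
  fix x assume "x \<in> (\<lambda>p. \<bar>inner (snd p) (Li (Pw w (L (fst p)) - Pw w0 (L (fst p))))\<bar>) ` equiv_norm.states nn"
  then obtain p where p: "p \<in> equiv_norm.states nn"
    and x: "x = \<bar>inner (snd p) (Li (Pw w (L (fst p)) - Pw w0 (L (fst p))))\<bar>" by blast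
  have "Li (Pw w (L (fst p)) - Pw w0 (L (fst p))) = snd (fst p) *\<^sub>R (w0 - w, 0)"
    using linear_Li by (simp add: linear_diff Li_Pw algebra_simps prod_eq_iff)
  then have "x = \<bar>lin p (w0 - w)\<bar>" by (simp add: x lin_def inner_scaleR_right del: scaleR_Pair)
  also have "\<dots> \<le> equiv_norm.lipK m M * norm (w0 - w)" by (rule equiv_norm.lin_bound[OF assms p])
  finally show "x \<le> equiv_norm.lipK m M * norm (w - w0)" by (simp add: norm_minus_commute)
qed

lemma numrad_projections: "numrad ` projections V = range (equiv_norm.rad nn)"
proof -
  have "projections V = range Pw" using projection_is_Pw Pw_projection by blast
  then show ?thesis by (simp only: image_image numrad_Pw)
qed

text \<open>The theorem in coordinates: the projection \<open>P\<^sub>w\<^sub>0\<close> at a minimizer \<open>w\<^sub>0\<close> of \<open>rad\<close> is the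
  unique minimal one, and the sharp minimum of \<open>rad\<close> becomes strong uniqueness because
  \<open>numrad (P\<^sub>w - P\<^sub>w\<^sub>0) \<le> lipK |w - w\<^sub>0|\<close>.\<close>
lemma strongly_unique_minimal_projection:
  assumes gt: "lambda_w V > 1"
  shows "\<exists>P0 \<in> projections V. numrad P0 = lambda_w V \<and>
           (\<forall>P \<in> projections V. numrad P = lambda_w V \<longrightarrow> P = P0) \<and>
           (\<exists>r>0. \<forall>P \<in> projections V. numrad P \<ge> numrad P0 + r * numrad (\<lambda>x. P x - P0 x))"
proof -
  obtain m M where "equiv_norm nn m M" using equiv_norm_exists by blast
  then interpret N: equiv_norm nn m M .
  obtain w0 where min: "\<forall>w. N.rad w0 \<le> N.rad w" using N.rad_has_minimizer by blast
  have lam: "lambda_w V = N.rad w0"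
    unfolding lambda_w_def numrad_projections by (rule cInf_eq_minimum) (use min in auto)
  then obtain k where k: "0 < k" "\<forall>w. N.rad w0 + k * norm (w - w0) \<le> N.rad w"
    using N.sharp_minimum[OF min] gt by auto
  have unique: "P = Pw w0" if P: "P \<in> projections V" "numrad P = lambda_w V" for P
  proof -
    obtain w where w: "P = Pw w" using projection_is_Pw[OF P(1)] by blast
    then have "k * norm (w - w0) \<le> 0" using k(2) P(2) lam numrad_Pw by (metis add_le_same_cancel1)
    then show ?thesis using k(1) w by (simp add: mult_le_0_iff)
  qed
  have strong: "numrad P \<ge> numrad (Pw w0) + k / N.lipK * numrad (\<lambda>x. P x - Pw w0 x)"
    if P: "P \<in> projections V" for P
  proof -
    obtain w where w: "P = Pw w" using projection_is_Pw[OF P] by blast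
    have "k / N.lipK * numrad (\<lambda>x. Pw w x - Pw w0 x) \<le> k / N.lipK * (N.lipK * norm (w - w0))"
      using numrad_Pw_diff[OF N.equiv_norm_axioms] k(1) N.lipK_pos by (intro mult_left_mono) auto
    also have "\<dots> = k * norm (w - w0)" using N.lipK_pos by simp
    also have "\<dots> \<le> N.rad w - N.rad w0" using k(2)[rule_format, of w] by linarith
    finally show ?thesis by (simp add: w numrad_Pw)
  qed
  show ?thesis
  proof (intro bexI[of _ "Pw w0"] conjI exI[of _ "k / N.lipK"] ballI impI)
    show "numrad (Pw w0) = lambda_w V" using lam by (simp add: numrad_Pw)
    show "0 < k / N.lipK" using k(1) N.lipK_pos by simp
  qed (use Pw_projection unique strong in auto)
qed

end


section \<open>Adapted coordinates\<close>

lemma span_pair: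
  fixes v1 v2 :: "'a::real_vector"
  assumes "v1 \<noteq> v2"
  shows "span {v1, v2} = range (\<lambda>w. fst w *\<^sub>R v1 + snd w *\<^sub>R v2)"
proof -
  have "span {v1, v2} = range (\<lambda>f. \<Sum>v\<in>{v1, v2}. f v *\<^sub>R v)" by (simp add: real_vector.span_finite)
  also have "\<dots> = range (\<lambda>w. fst w *\<^sub>R v1 + snd w *\<^sub>R v2)"
  proof (intro set_eqI iffI)
    fix y assume "y \<in> range (\<lambda>f. \<Sum>v\<in>{v1, v2}. f v *\<^sub>R v)"
    then obtain f where "y = f v1 *\<^sub>R v1 + f v2 *\<^sub>R v2" using assms by auto
    then show "y \<in> range (\<lambda>w. fst w *\<^sub>R v1 + snd w *\<^sub>R v2)"
      by (intro image_eqI[of _ _ "(f v1, f v2)"]) simp_all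
  next
    fix y assume "y \<in> range (\<lambda>w. fst w *\<^sub>R v1 + snd w *\<^sub>R v2)"
    then obtain w where y: "y = fst w *\<^sub>R v1 + snd w *\<^sub>R v2" by auto
    then show "y \<in> range (\<lambda>f. \<Sum>v\<in>{v1, v2}. f v *\<^sub>R v)"
      using assms by (intro image_eqI[of _ _ "\<lambda>v. if v = v1 then fst w else snd w"]) simp_all
  qed
  finally show ?thesis .
qed

lemma coordinates_from_basis:
  fixes a v1 v2 :: "'a::real_normed_vector"
  assumes ind: "independent {a, v1, v2}" and neq: "a \<noteq> v1" "a \<noteq> v2" "v1 \<noteq> v2"
    and spans: "span {a, v1, v2} = UNIV"
  defines "L \<equiv> \<lambda>c. fst (fst c) *\<^sub>R v1 + snd (fst c) *\<^sub>R v2 + snd c *\<^sub>R a"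
  shows "coordinates L (span {v1, v2})"
proof (rule coordinates.intro)
  show lin: "linear L" by (intro linearI) (simp_all add: L_def algebra_simps)
  have sum3: "(\<Sum>v\<in>{a, v1, v2}. f v *\<^sub>R v) = L ((f v1, f v2), f a)" for f
    using neq by (simp add: L_def algebra_simps)
  have kernel: "c = 0" if "L c = 0" for c
  proof -
    define f where "f v = (if v = v1 then fst (fst c) else if v = v2 then snd (fst c) else snd c)" for v
    have c_eq: "c = ((f v1, f v2), f a)" using neq by (simp add: f_def)
    then have "(\<Sum>v\<in>{a, v1, v2}. f v *\<^sub>R v) = 0" using that sum3[of f] by simp
    moreover have "\<not> (\<exists>u. (\<exists>v\<in>{a, v1, v2}. u v \<noteq> 0) \<and> (\<Sum>v\<in>{a, v1, v2}. u v *\<^sub>R v) = 0)"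
      using ind unfolding real_vector.dependent_finite[OF finite.insertI[OF finite.insertI[OF finite.insertI[OF finite.emptyI]]]] .
    ultimately have "\<forall>v\<in>{a, v1, v2}. f v = 0" by blast
    then show ?thesis using c_eq by (simp add: zero_prod_def)
  qed
  have "inj L"
  proof (rule injI)
    fix x y assume "L x = L y"
    then have "L (x - y) = 0" using linear_diff[OF lin] by simp
    then have "x - y = 0" by (rule kernel)
    then show "x = y" by simp
  qed
  moreover have "y \<in> range L" for y
  proof -
    have "y \<in> range (\<lambda>f. \<Sum>v\<in>{a, v1, v2}. f v *\<^sub>R v)"
      using spans real_vector.span_finite[of "{a, v1, v2}"] by simp
    then show ?thesis using sum3 by auto
  qed
  ultimately show "bij L" by (auto simp: bij_def)
  show "span {v1, v2} = range (\<lambda>w. L (w, 0))" using span_pair[OF neq(3)] by (simp add: L_def)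
qed

lemma coordinates_exist:
  fixes V :: "'a::real_normed_vector set"
  assumes dimX: "dim (UNIV :: 'a set) = 3" and sV: "subspace V" and dimV: "dim V = 2"
  shows "\<exists>L. coordinates L V"
proof -
  obtain B where B: "B \<subseteq> V" "independent B" "V \<subseteq> span B" "card B = dim V"
    by (rule real_vector.basis_exists)
  have V_span: "V = span B" using real_vector.span_minimal[OF B(1) sV] B(3) by blast
  have "card B = 2" using B(4) dimV by simp
  then obtain v1 v2 where v: "B = {v1, v2}" "v1 \<noteq> v2" by (auto simp: card_2_iff)
  have "V \<noteq> UNIV"
  proof
    assume "V = UNIV"
    then show False using dimX dimV by simp
  qed
  then obtain a where a: "a \<notin> V" by blast
  then have "a \<notin> span {v1, v2}" unfolding V_span v .
  from real_vector.independent_insertI[OF this B(2)[unfolded v]]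
  have ind: "independent {a, v1, v2}" .
  have neq: "a \<noteq> v1" "a \<noteq> v2" using a B(1) v by auto
  have "span {a, v1, v2} = UNIV"
  proof (rule ccontr)
    assume "span {a, v1, v2} \<noteq> UNIV"
    then obtain y where y: "y \<notin> span {a, v1, v2}" by blast
    define S where "S = {y, a, v1, v2}"
    have ind_S: "independent S" unfolding S_def by (rule real_vector.independent_insertI[OF y ind])
    have "y \<notin> {a, v1, v2}"
    proof
      assume "y \<in> {a, v1, v2}"
      then have "y \<in> span {a, v1, v2}" by (rule real_vector.span_base)
      with y show False by contradiction
    qed
    then have "card S = 4" using neq v(2) by (simp add: S_def)
    then have dim_S: "dim S = 4" using real_vector.dim_eq_card_independent[OF ind_S] by simp
    obtain B0 :: "'a set" where B0: "B0 \<subseteq> UNIV" "independent B0" "UNIV \<subseteq> span B0" "card B0 = dim (UNIV :: 'a set)"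
      by (rule real_vector.basis_exists)
    have "finite B0" using B0(4) dimX by (metis card.infinite zero_neq_numeral)
    have "dim S \<le> card B0"
      by (rule real_vector.dim_le_card[OF subset_trans[OF subset_UNIV B0(3)] \<open>finite B0\<close>])
    then show False using dim_S B0(4) dimX by simp
  qed
  from coordinates_from_basis[OF ind neq v(2) this] show ?thesis
    unfolding V_span v by blast
qed

theorem theorem3p4:
  fixes V :: "'a::banach set"
  assumes "dim (UNIV :: 'a set) = 3"
    and "subspace V" and "dim V = 2"
    and "lambda_w V > 1"
  shows "\<exists>P0 \<in> projections V. numrad P0 = lambda_w V \<and>
           (\<forall>P \<in> projections V. numrad P = lambda_w V \<longrightarrow> P = P0) \<and>
           (\<exists>r>0. \<forall>P \<in> projections V. numrad P \<ge> numrad P0 + r * numrad (\<lambda>x. P x - P0 x))"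
proof -
  obtain L :: "e3 \<Rightarrow> 'a" where "coordinates L V"
    using coordinates_exist[OF assms(1-3)] by blast
  then show ?thesis by (rule coordinates.strongly_unique_minimal_projection[OF _ assms(4)])
qed
end
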